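(* Let $M\in\mathrm{GL}(2,\mathbb{Z})$ with $\det(M)=-1$. If $M$ is reversible mod $n$ for infinitely many $n\in\mathbb{N}$, then $M^2=\mathbb{1}$.
   Context: $M$ is reversible mod $n$ if there exists $R\in\mathrm{GL}(2,\mathbb{Z}/n\mathbb{Z})$ with $RMR^{-1}\equiv M^{-1}\pmod n$. *)

theory Defs
  imports "HOL-Analysis.Analysis" "HOL-Number_Theory.Cong"
begin

definition mat_cong :: "int^2^2 \<Rightarrow> int^2^2 \<Rightarrow> nat \<Rightarrow> bool" where
  "mat_cong A B n \<longleftrightarrow> (\<forall>i j. [A$i$j = B$i$j] (mod int n))"

text \<open>R is in GL(2, Z/nZ), represented by an integer lift R with an integer lift S
  of its inverse modulo n.\<close>
definition GL2_mod :: "nat \<Rightarrow> int^2^2 \<Rightarrow> int^2^2 \<Rightarrow> bool" where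
  "GL2_mod n R S \<longleftrightarrow> mat_cong (R ** S) (mat 1) n \<and> mat_cong (S ** R) (mat 1) n"

definition reversible_mod :: "int^2^2 \<Rightarrow> nat \<Rightarrow> bool" where
  "reversible_mod M n \<longleftrightarrow>
     (\<exists>R S. GL2_mod n R S \<and> mat_cong (R ** M ** S) (matrix_inv M) n)"

end

theory Submission
  imports Defs
begin

text \<open>Conjugation preserves the trace modulo n, while for det M = -1 the inverse of M has
  trace -tr M. So reversibility mod n forces n | 2 tr M; for infinitely many n this gives
  tr M = 0, and Cayley--Hamilton, M^2 = (tr M) M - (det M) I, yields M^2 = 1.\<close>

lemma trace_2: "trace (A::'a::semiring_1^2^2) = A$1$1 + A$2$2"
  by (simp add: trace_def sum_2)

lemma cayley_hamilton_2: "(A::'a::comm_ring_1^2^2) ** A + mat (det A) = mat (trace A) ** A"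
  by (simp add: vec_eq_iff forall_2 matrix_matrix_mult_def sum_2 mat_def det_2 trace_2
      algebra_simps)

lemma matrix_inv_eq_right_inverse:
  fixes A :: "'a::semiring_1^'n^'n"
  assumes "invertible A" and "A ** B = mat 1"
  shows "matrix_inv A = B"
proof -
  have "matrix_inv A ** A = mat 1"
    using someI_ex[OF assms(1)[unfolded invertible_def]] by (simp add: matrix_inv_def)
  have "matrix_inv A = matrix_inv A ** (A ** B)" by (simp add: assms(2))
  also have "\<dots> = B" by (simp add: matrix_mul_assoc \<open>matrix_inv A ** A = mat 1\<close>)
  finally show ?thesis .
qed

lemma trace_matrix_inv_det_neg1:
  fixes M :: "'a::comm_ring_1^2^2"
  assumes "invertible M" and "det M = -1"
  shows "trace (matrix_inv M) = - trace M"
proof -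
  define K :: "'a^2^2" where
    "K = (\<chi> i j. if i = 1 then (if j = 1 then - M$2$2 else M$1$2)
                  else (if j = 1 then M$2$1 else - M$1$1))"
  have "M ** K = mat 1"
    using assms(2) by (simp add: K_def vec_eq_iff forall_2 matrix_matrix_mult_def sum_2 mat_def
        det_2 algebra_simps)
  then have "matrix_inv M = K" by (rule matrix_inv_eq_right_inverse[OF assms(1)])
  then show ?thesis by (simp add: K_def trace_2)
qed

lemma mat_cong_mult_right: "mat_cong A B n \<Longrightarrow> mat_cong (A ** C) (B ** C) n"
  unfolding mat_cong_def matrix_matrix_mult_def by (auto intro!: cong_sum cong_mult)

lemma trace_cong: "mat_cong A B n \<Longrightarrow> [trace A = trace B] (mod int n)"
  unfolding mat_cong_def trace_def by (auto intro!: cong_sum)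

lemma trace_conj_cong:
  assumes "GL2_mod n R S"
  shows "[trace (R ** M ** S) = trace M] (mod int n)"
proof -
  have "trace (R ** M ** S) = trace (S ** R ** M)"
    by (metis trace_mul_sym matrix_mul_assoc)
  moreover have "mat_cong (S ** R ** M) (mat 1 ** M) n"
    using assms unfolding GL2_mod_def by (blast intro: mat_cong_mult_right)
  ultimately show ?thesis by (metis trace_cong matrix_mul_lid)
qed

lemma reversible_mod_dvd_trace:
  fixes M :: "int^2^2"
  assumes "invertible M" and "det M = -1" and "reversible_mod M n"
  shows "int n dvd 2 * trace M"
proof -
  obtain R S where "GL2_mod n R S" and "mat_cong (R ** M ** S) (matrix_inv M) n"
    using assms(3) unfolding reversible_mod_def by blast
  then have "[trace M = - trace M] (mod int n)"
    by (metis trace_conj_cong trace_cong trace_matrix_inv_det_neg1[OF assms(1,2)]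
        cong_sym cong_trans)
  then show ?thesis by (simp add: cong_iff_dvd_diff)
qed

lemma int_eq_0_if_infinite_divisors:
  fixes t :: int
  assumes "infinite {n::nat. int n dvd t}"
  shows "t = 0"
proof (rule ccontr)
  assume "t \<noteq> 0"
  then have "{n::nat. int n dvd t} \<subseteq> {..nat \<bar>t\<bar>}"
    by (auto dest: dvd_imp_le_int)
  then show False using assms finite_subset by blast
qed

theorem corollary4p12:
  fixes M :: "int^2^2"
  assumes "invertible M"
    and "det M = -1"
    and "infinite {n::nat. reversible_mod M n}"
  shows "M ** M = mat 1"
proof -
  have "{n. reversible_mod M n} \<subseteq> {n. int n dvd 2 * trace M}"
    using reversible_mod_dvd_trace[OF assms(1,2)] by blast
  then have "trace M = 0"
    using int_eq_0_if_infinite_divisors assms(3) finite_subset by fastforce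
  then have "M ** M + mat (-1) = 0"
    using cayley_hamilton_2[of M] assms(2) by simp
  then show ?thesis
    by (simp add: vec_eq_iff forall_2 mat_def)
qed

end
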